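(* Let $K$ be an algebraically closed field of characteristic zero, $\deg_1$ the standard homogeneous degree on $K[x_1,\dots,x_n]$, $\Phi=(f_1,\dots,f_n)$ a polynomial automorphism of $K^n$, $d_i=\deg_1(f_i)$, $\deg_2$ the weighted degree with weights $d_i$ on $x_i$, $\nabla=d_1+\dots+d_n-n$, and assume the ideal $I=\{Q:Q(\overline{f_1},\dots,\overline{f_n})=0\}$ equals $(R)$ for an irreducible $R$ with $\frac{\partial R}{\partial x_n}\ne0$. Let $P$ be a nonzero polynomial and $k\in\mathbb{N}$ with $\tilde P\in(R^k)\setminus(R^{k+1})$. Then: (i) $\deg_1(\frac{\partial^kP}{\partial x_n^k}\circ\Phi)=\deg_2(\frac{\partial^kP}{\partial x_n^k})=\deg_2(P)-kd_n$; (ii) $\deg_1(P\circ\Phi)\ge\deg_2(P)-k\nabla$; (iii) $\deg_1(P\circ\Phi)\ge k(\deg_2(R)-\nabla)$.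
   Context: $\overline{f}$ denotes the homogeneous component of highest degree of $f$ and $\tilde P$ the leading term of $P$ with respect to $\deg_2$. *)

theory Defs
  imports "HOL-Library.Poly_Mapping" "HOL-Computational_Algebra.Polynomial"
begin

text \<open>Multivariate polynomials over a coefficient type 'a, in variables x_0, x_1, ...
  (variable x_(i+1) of the paper is index i here).\<close>

type_synonym 'a mpoly = "(nat \<Rightarrow>\<^sub>0 nat) \<Rightarrow>\<^sub>0 'a"

definition monom :: "(nat \<Rightarrow>\<^sub>0 nat) \<Rightarrow> 'a::zero \<Rightarrow> 'a mpoly" where
  "monom m c = Poly_Mapping.single m c"

definition Var :: "nat \<Rightarrow> 'a::{zero,one} mpoly" where
  "Var i = Poly_Mapping.single (Poly_Mapping.single i 1) 1"

definition polys :: "nat \<Rightarrow> 'a::zero mpoly set" where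
  "polys n = {p. \<forall>m \<in> Poly_Mapping.keys p. \<forall>i \<in> Poly_Mapping.keys m. i < n}"

definition subst :: "(nat \<Rightarrow> 'a::comm_semiring_1 mpoly) \<Rightarrow> 'a mpoly \<Rightarrow> 'a mpoly" where
  "subst g p = (\<Sum>m\<in>Poly_Mapping.keys p. monom 0 (Poly_Mapping.lookup p m) * (\<Prod>i\<in>Poly_Mapping.keys m. g i ^ Poly_Mapping.lookup m i))"

text \<open>Weighted degree of a monomial / polynomial (weight w i on variable i);
  the degree of the zero polynomial is set to 0 (only used for nonzero polynomials).\<close>
definition mon_wdeg :: "(nat \<Rightarrow> nat) \<Rightarrow> (nat \<Rightarrow>\<^sub>0 nat) \<Rightarrow> nat" where
  "mon_wdeg w m = (\<Sum>i\<in>Poly_Mapping.keys m. w i * Poly_Mapping.lookup m i)"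

definition wdeg :: "(nat \<Rightarrow> nat) \<Rightarrow> 'a::zero mpoly \<Rightarrow> int" where
  "wdeg w p = int (Max (insert 0 (mon_wdeg w ` Poly_Mapping.keys p)))"

definition tdeg :: "'a::zero mpoly \<Rightarrow> int" where
  "tdeg p = wdeg (\<lambda>_. 1) p"

definition top_comp :: "(nat \<Rightarrow> nat) \<Rightarrow> 'a::comm_monoid_add mpoly \<Rightarrow> 'a mpoly" where
  "top_comp w p = (\<Sum>m\<in>{m \<in> Poly_Mapping.keys p. int (mon_wdeg w m) = wdeg w p}. monom m (Poly_Mapping.lookup p m))"

definition hbar :: "'a::comm_monoid_add mpoly \<Rightarrow> 'a mpoly" where
  "hbar p = top_comp (\<lambda>_. 1) p"

definition pderiv_var :: "nat \<Rightarrow> 'a::comm_semiring_1 mpoly \<Rightarrow> 'a mpoly" where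
  "pderiv_var j p = (\<Sum>m\<in>Poly_Mapping.keys p. monom (m - Poly_Mapping.single j 1) (of_nat (Poly_Mapping.lookup m j) * Poly_Mapping.lookup p m))"

definition pideal :: "nat \<Rightarrow> 'a::comm_semiring_1 mpoly \<Rightarrow> 'a mpoly set" where
  "pideal n a = {a * s | s. s \<in> polys n}"

definition irreducible_in :: "nat \<Rightarrow> 'a::comm_semiring_1 mpoly \<Rightarrow> bool" where
  "irreducible_in n r \<longleftrightarrow> r \<in> polys n \<and> r \<noteq> 0 \<and>
     \<not> (\<exists>u \<in> polys n. r * u = 1) \<and>
     (\<forall>a \<in> polys n. \<forall>b \<in> polys n. r = a * b \<longrightarrow> (\<exists>u \<in> polys n. a * u = 1) \<or> (\<exists>u \<in> polys n. b * u = 1))"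

definition poly_automorphism :: "nat \<Rightarrow> (nat \<Rightarrow> 'a::comm_semiring_1 mpoly) \<Rightarrow> bool" where
  "poly_automorphism n f \<longleftrightarrow> (\<forall>i<n. f i \<in> polys n) \<and>
     (\<exists>g. (\<forall>i<n. g i \<in> polys n) \<and>
          (\<forall>i<n. subst g (f i) = Var i) \<and> (\<forall>i<n. subst f (g i) = Var i))"

definition alg_closed :: "'a::field itself \<Rightarrow> bool" where
  "alg_closed _ \<longleftrightarrow> (\<forall>p :: 'a poly. degree p > 0 \<longrightarrow> (\<exists>x. poly p x = 0))"

end

theory Submission
  imports Defs "Jordan_Normal_Form.Determinant"
begin

text \<open>Write \<open>T\<close> for the top \<open>deg\<^sub>2\<close>-component of \<open>P\<close> and \<open>T = R\<^sup>k S\<close> with \<open>S \<notin> (R)\<close>.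
  Substituting the leading forms \<open>f\<^sub>i\<close>-bar is a ring homomorphism \<open>\<phi>\<close> with kernel \<open>(R)\<close>, so
  \<open>\<phi> R = 0\<close> while \<open>\<phi> S\<close> and \<open>\<phi> (\<partial>R/\<partial>x\<^sub>n)\<close> are nonzero (the latter has smaller \<open>x\<^sub>n\<close>-degree than \<open>R\<close>).
  By Leibniz, \<open>\<phi> (\<partial>\<^sup>k T/\<partial>x\<^sub>n\<^sup>k) = k! \<phi>(\<partial>R/\<partial>x\<^sub>n)\<^sup>k \<phi>(S) \<noteq> 0\<close>.  Since \<open>\<partial>\<^sup>k T/\<partial>x\<^sub>n\<^sup>k\<close> is the top
  component of \<open>\<partial>\<^sup>k P/\<partial>x\<^sub>n\<^sup>k\<close>, no cancellation happens in \<open>(\<partial>\<^sup>k P/\<partial>x\<^sub>n\<^sup>k) \<circ> \<Phi>\<close>, which gives (i).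
  For (ii), the chain rule together with Cramer's rule for the inverse of the Jacobian matrix
  (whose determinant is a nonzero constant) shows that each derivative \<open>\<partial>/\<partial>x\<^sub>n\<close> raises
  \<open>deg\<^sub>1(\<cdot> \<circ> \<Phi>)\<close> by at most \<open>\<nabla> - d\<^sub>n\<close>; (iii) follows from (ii) because \<open>deg\<^sub>2 P \<ge> k deg\<^sub>2 R\<close>.\<close>

abbreviation lookup :: "('a \<Rightarrow>\<^sub>0 'b::zero) \<Rightarrow> 'a \<Rightarrow> 'b" where
  "lookup \<equiv> Poly_Mapping.lookup"
abbreviation keys :: "('a \<Rightarrow>\<^sub>0 'b::zero) \<Rightarrow> 'a set" where
  "keys \<equiv> Poly_Mapping.keys"
abbreviation single :: "'a \<Rightarrow> 'b::zero \<Rightarrow> 'a \<Rightarrow>\<^sub>0 'b" where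
  "single \<equiv> Poly_Mapping.single"

hide_const (open) Polynomial.monom

section \<open>Monomials and substitution\<close>

lemma poly_mapping_eq_sum_single:
  fixes p :: "'a \<Rightarrow>\<^sub>0 'b::comm_monoid_add"
  assumes "finite S" "keys p \<subseteq> S"
  shows "p = (\<Sum>m\<in>S. single m (lookup p m))"
proof (rule poly_mapping_eqI)
  fix k
  have "lookup (\<Sum>m\<in>S. single m (lookup p m)) k = (\<Sum>m\<in>S. (lookup p m when m = k))"
    by (simp add: lookup_sum lookup_single)
  also have "\<dots> = (\<Sum>m\<in>S \<inter> {k}. lookup p m)"
    using assms(1) by (simp add: sum.inter_restrict when_def)
  also have "\<dots> = lookup p k"
    using assms(2) by (cases "k \<in> S") (auto simp: in_keys_iff)
  finally show "lookup p k = lookup (\<Sum>m\<in>S. single m (lookup p m)) k" by simp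
qed

lemma poly_mapping_sum_single: "(\<Sum>m\<in>keys p. single m (lookup p m)) = p"
  by (rule poly_mapping_eq_sum_single[symmetric]) auto

lemma keys_plus_nat: "keys (a + b :: 'x \<Rightarrow>\<^sub>0 nat) = keys a \<union> keys b"
  by (auto simp: in_keys_iff lookup_add)

lemma prod_single_one:
  "(\<Prod>i\<in>S. single (m i) (1::'c::comm_semiring_1)) = single (\<Sum>i\<in>S. m i) 1"
  by (induction S rule: infinite_finite_induct) (auto simp: mult_single)

lemma monom_zero [simp]: "monom m 0 = 0"
  by (simp add: monom_def)

lemma monom_add: "monom m (a + b) = monom m a + monom m b"
  by (simp add: monom_def single_add)

lemma monom_mult: "monom a x * monom b y = monom (a + b) (x * y)"
  by (simp add: monom_def mult_single)

lemma monom_const_one [simp]: "monom 0 1 = 1"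
  by (simp add: monom_def)

lemma monom_const_of_nat: "monom 0 (of_nat k) = of_nat k"
  by (simp add: monom_def)

lemma monom_const_of_int: "monom 0 (of_int k) = of_int k"
  by (simp add: monom_def)

lemma Var_power: "Var i ^ e = monom (single i e) 1"
  by (induction e) (auto simp: Var_def monom_def mult_single single_add[symmetric])

lemma mult_eq_sum_monom:
  fixes p q :: "'a::comm_semiring_1 mpoly"
  shows "p * q = (\<Sum>a\<in>keys p. \<Sum>b\<in>keys q. monom (a + b) (lookup p a * lookup q b))"
proof -
  have "p * q = (\<Sum>a\<in>keys p. monom a (lookup p a)) * (\<Sum>b\<in>keys q. monom b (lookup q b))"
    by (simp add: monom_def poly_mapping_sum_single)
  then show ?thesis by (simp add: sum_product monom_mult)
qed

definition power_product :: "(nat \<Rightarrow> 'a::comm_semiring_1 mpoly) \<Rightarrow> (nat \<Rightarrow>\<^sub>0 nat) \<Rightarrow> 'a mpoly" where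
  "power_product g m = (\<Prod>i\<in>keys m. g i ^ lookup m i)"

lemma power_product_superset:
  "finite S \<Longrightarrow> keys m \<subseteq> S \<Longrightarrow> power_product g m = (\<Prod>i\<in>S. g i ^ lookup m i)"
  unfolding power_product_def by (intro prod.mono_neutral_left) (auto simp: in_keys_iff)

lemma power_product_zero [simp]: "power_product g 0 = 1"
  by (simp add: power_product_def)

lemma power_product_add: "power_product g (a + b) = power_product g a * power_product g b"
proof -
  let ?S = "keys a \<union> keys b"
  have "power_product g (a + b) = (\<Prod>i\<in>?S. g i ^ lookup (a + b) i)"
    by (rule power_product_superset) (auto simp: keys_plus_nat)
  also have "\<dots> = (\<Prod>i\<in>?S. g i ^ lookup a i) * (\<Prod>i\<in>?S. g i ^ lookup b i)"
    by (simp add: lookup_add power_add prod.distrib)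
  finally show ?thesis
    using power_product_superset[of ?S a g] power_product_superset[of ?S b g] by simp
qed

lemma power_product_Var: "power_product Var m = monom m 1"
proof -
  have "power_product Var m = (\<Prod>i\<in>keys m. single (single i (lookup m i)) 1)"
    unfolding power_product_def by (simp add: Var_power monom_def)
  also have "\<dots> = single (\<Sum>i\<in>keys m. single i (lookup m i)) 1"
    by (rule prod_single_one)
  finally show ?thesis by (simp add: poly_mapping_sum_single monom_def)
qed

lemma subst_eq_sum:
  "finite S \<Longrightarrow> keys p \<subseteq> S \<Longrightarrow> subst g p = (\<Sum>m\<in>S. monom 0 (lookup p m) * power_product g m)"
  unfolding subst_def power_product_def[symmetric]
  by (intro sum.mono_neutral_left) (auto simp: in_keys_iff)

lemma subst_zero [simp]: "subst g 0 = 0"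
  by (simp add: subst_def)

lemma subst_add: "subst g (p + q) = subst g p + subst g q"
proof -
  let ?S = "keys p \<union> keys q"
  have "subst g (p + q) = (\<Sum>m\<in>?S. monom 0 (lookup (p + q) m) * power_product g m)"
    by (rule subst_eq_sum) (use keys_add[of p q] in auto)
  also have "\<dots> = (\<Sum>m\<in>?S. monom 0 (lookup p m) * power_product g m)
      + (\<Sum>m\<in>?S. monom 0 (lookup q m) * power_product g m)"
    by (simp add: lookup_add monom_add distrib_right sum.distrib)
  finally show ?thesis
    using subst_eq_sum[of ?S p g] subst_eq_sum[of ?S q g] by simp
qed

lemma subst_sum: "subst g (sum f S) = (\<Sum>x\<in>S. subst g (f x))"
  by (induction S rule: infinite_finite_induct) (auto simp: subst_add)

lemma subst_monom: "subst g (monom m c) = monom 0 c * power_product g m"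
  by (subst subst_eq_sum[where S="{m}"]) (auto simp: monom_def lookup_single)

lemma subst_mult: "subst g (p * q) = subst g p * subst g q"
proof -
  have "subst g (p * q) = (\<Sum>a\<in>keys p. \<Sum>b\<in>keys q.
      (monom 0 (lookup p a) * power_product g a) * (monom 0 (lookup q b) * power_product g b))"
    by (subst mult_eq_sum_monom)
      (simp add: subst_sum subst_monom power_product_add monom_mult mult_ac)
  also have "\<dots> = subst g p * subst g q"
    by (simp add: subst_def power_product_def sum_product)
  finally show ?thesis .
qed

lemma subst_const: "subst g (monom 0 c) = monom 0 c"
  by (simp add: subst_monom)

lemma subst_one [simp]: "subst g 1 = 1"
  using subst_const[of g 1] by simp

lemma subst_of_nat: "subst g (of_nat k) = of_nat k"
  using subst_const[of g "of_nat k"] by (simp add: monom_const_of_nat)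

lemma subst_power: "subst g (p ^ k) = subst g p ^ k"
  by (induction k) (auto simp: subst_mult)

lemma subst_Var: "subst g (Var i) = g i"
  by (simp add: Var_def subst_monom[unfolded monom_def] power_product_def)

lemma subst_Var_id: "subst Var p = p"
  by (simp add: subst_def power_product_def[symmetric] power_product_Var monom_mult
      flip: monom_def[abs_def]) (simp add: monom_def poly_mapping_sum_single)

lemma subst_prod: "subst g (prod f S) = (\<Prod>x\<in>S. subst g (f x))"
  by (induction S rule: infinite_finite_induct) (auto simp: subst_mult)

lemma subst_power_product: "subst h (power_product g m) = power_product (\<lambda>i. subst h (g i)) m"
  by (simp add: power_product_def subst_prod subst_power)

lemma subst_subst: "subst h (subst g p) = subst (\<lambda>i. subst h (g i)) p"
proof -
  have "subst h (subst g p) = (\<Sum>m\<in>keys p. subst h (monom 0 (lookup p m) * power_product g m))"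
    unfolding subst_def[of g] power_product_def[symmetric] by (rule subst_sum)
  also have "\<dots> = (\<Sum>m\<in>keys p. monom 0 (lookup p m) * power_product (\<lambda>i. subst h (g i)) m)"
    by (simp only: subst_mult subst_const subst_power_product)
  finally show ?thesis
    by (simp add: subst_def power_product_def)
qed

section \<open>Polynomials in the first \<open>n\<close> variables\<close>

lemma polys_zero [simp]: "0 \<in> polys n"
  by (simp add: polys_def)

lemma polys_add: "p \<in> polys n \<Longrightarrow> q \<in> polys n \<Longrightarrow> p + q \<in> polys n"
  using keys_add[of p q] by (auto simp: polys_def)

lemma polys_mult: "p \<in> polys n \<Longrightarrow> q \<in> polys n \<Longrightarrow> p * q \<in> polys n"
  using keys_mult[of p q] by (fastforce simp: polys_def keys_plus_nat)

lemma polys_one [simp]: "(1::'a::comm_semiring_1 mpoly) \<in> polys n"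
  by (auto simp: polys_def)

lemma polys_const: "monom 0 c \<in> polys n"
  by (auto simp: polys_def monom_def)

lemma polys_monom: "keys m \<subseteq> {..<n} \<Longrightarrow> monom m c \<in> polys n"
  by (auto simp: polys_def monom_def)

lemma polys_sum: "(\<And>x. x \<in> S \<Longrightarrow> f x \<in> polys n) \<Longrightarrow> sum f S \<in> polys n"
  by (induction S rule: infinite_finite_induct) (auto simp: polys_add)

lemma polys_prod: "(\<And>x. x \<in> S \<Longrightarrow> (f x :: 'a::comm_semiring_1 mpoly) \<in> polys n) \<Longrightarrow> prod f S \<in> polys n"
  by (induction S rule: infinite_finite_induct) (auto simp: polys_mult)

lemma polys_power: "(p :: 'a::comm_semiring_1 mpoly) \<in> polys n \<Longrightarrow> p ^ k \<in> polys n"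
  by (induction k) (auto simp: polys_mult)

lemma subst_polys:
  assumes "p \<in> polys n" "\<And>i. i < n \<Longrightarrow> g i \<in> polys n"
  shows "subst g p \<in> polys n"
  unfolding subst_def using assms
  by (intro polys_sum polys_mult polys_const polys_prod polys_power) (auto simp: polys_def)

lemma subst_cong:
  assumes "p \<in> polys n" "\<And>i. i < n \<Longrightarrow> g i = h i"
  shows "subst g p = subst h p"
  unfolding subst_def using assms by (intro sum.cong refl arg_cong2[where f="(*)"] prod.cong)
    (auto simp: polys_def)

lemma polys_induct [consumes 1, case_names const Var add mult]:
  fixes p :: "'a::comm_semiring_1 mpoly"
  assumes p: "p \<in> polys n"
    and const: "\<And>c. Q (monom 0 c)"
    and Var: "\<And>i. i < n \<Longrightarrow> Q (Var i)"
    and add: "\<And>p q. Q p \<Longrightarrow> Q q \<Longrightarrow> Q (p + q)"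
    and mult: "\<And>p q. Q p \<Longrightarrow> Q q \<Longrightarrow> Q (p * q)"
  shows "Q p"
proof -
  have sum: "Q (sum h S)" if "\<And>x. x \<in> S \<Longrightarrow> Q (h x)" for h :: "'b \<Rightarrow> 'a mpoly" and S
    using that by (induction S rule: infinite_finite_induct) (auto simp: add const[of 0, simplified])
  have prod: "Q (prod h S)" if "\<And>x. x \<in> S \<Longrightarrow> Q (h x)" for h :: "'b \<Rightarrow> 'a mpoly" and S
    using that by (induction S rule: infinite_finite_induct) (auto simp: mult const[of 1, simplified])
  have power: "Q (x ^ k)" if "Q x" for x :: "'a mpoly" and k
    using that by (induction k) (auto simp: mult const[of 1, simplified])
  have "p = (\<Sum>m\<in>keys p. monom 0 (lookup p m) * (\<Prod>i\<in>keys m. Var i ^ lookup m i))"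
    using subst_Var_id[of p] by (simp add: subst_def)
  also have "Q \<dots>"
    using p by (intro sum mult const prod power Var) (auto simp: polys_def)
  finally show ?thesis .
qed

section \<open>Partial derivatives\<close>

lemma pderiv_var_eq_sum: "finite S \<Longrightarrow> keys p \<subseteq> S \<Longrightarrow>
    pderiv_var j p = (\<Sum>m\<in>S. monom (m - single j 1) (of_nat (lookup m j) * lookup p m))"
  unfolding pderiv_var_def by (intro sum.mono_neutral_left) (auto simp: in_keys_iff)

lemma pderiv_var_zero [simp]: "pderiv_var j 0 = 0"
  by (simp add: pderiv_var_def)

lemma pderiv_var_add: "pderiv_var j (p + q) = pderiv_var j p + pderiv_var j q"
proof -
  let ?S = "keys p \<union> keys q" and ?t = "\<lambda>r m. monom (m - single j 1) (of_nat (lookup m j) * lookup r m)"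
  have "pderiv_var j (p + q) = (\<Sum>m\<in>?S. ?t (p + q) m)"
    by (rule pderiv_var_eq_sum) (use keys_add[of p q] in auto)
  also have "\<dots> = (\<Sum>m\<in>?S. ?t p m) + (\<Sum>m\<in>?S. ?t q m)"
    by (simp add: lookup_add monom_add distrib_left sum.distrib)
  finally show ?thesis
    using pderiv_var_eq_sum[of ?S p j] pderiv_var_eq_sum[of ?S q j] by simp
qed

lemma pderiv_var_sum: "pderiv_var j (sum f S) = (\<Sum>x\<in>S. pderiv_var j (f x))"
  by (induction S rule: infinite_finite_induct) (auto simp: pderiv_var_add)

lemma pderiv_var_diff: "pderiv_var j (p - q :: 'a::comm_ring_1 mpoly) = pderiv_var j p - pderiv_var j q"
  by (metis add_diff_cancel_right' diff_add_cancel pderiv_var_add)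

lemma pderiv_var_monom:
  "pderiv_var j (monom m c) = monom (m - single j 1) (of_nat (lookup m j) * c)"
  by (subst pderiv_var_eq_sum[where S="{m}"]) (auto simp: monom_def lookup_single)

lemma pderiv_var_const: "pderiv_var j (monom 0 c) = 0"
  by (simp add: pderiv_var_monom)

lemma pderiv_var_Var: "pderiv_var j (Var i) = (if i = j then 1 else 0)"
  by (auto simp: Var_def monom_def[symmetric] pderiv_var_monom lookup_single when_def)

lemma pderiv_var_monom_mult:
  "pderiv_var j (monom (a + b) (x * y))
     = pderiv_var j (monom a x) * monom b y + monom a x * pderiv_var j (monom b y)"
proof -
  have shift: "u + (v - single j 1) = u + v - single j 1" if "lookup v j \<noteq> 0" for u v :: "nat \<Rightarrow>\<^sub>0 nat"
    by (rule poly_mapping_eqI) (use that in \<open>auto simp: lookup_add lookup_minus lookup_single when_def\<close>)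
  have "pderiv_var j (monom a x) * monom b y = monom (a + b - single j 1) (of_nat (lookup a j) * x * y)"
    using shift[of a b] by (cases "lookup a j = 0") (auto simp: pderiv_var_monom monom_mult add.commute mult_ac)
  moreover have "monom a x * pderiv_var j (monom b y) = monom (a + b - single j 1) (of_nat (lookup b j) * x * y)"
    using shift[of b a] by (cases "lookup b j = 0") (auto simp: pderiv_var_monom monom_mult mult_ac)
  ultimately show ?thesis
    by (simp add: pderiv_var_monom lookup_add algebra_simps flip: monom_add)
qed

lemma pderiv_var_mult: "pderiv_var j (p * q) = pderiv_var j p * q + p * pderiv_var j q"
proof -
  let ?p = "\<lambda>a. monom a (lookup p a)" and ?q = "\<lambda>b. monom b (lookup q b)"
  have "pderiv_var j (p * q)
      = (\<Sum>a\<in>keys p. \<Sum>b\<in>keys q. pderiv_var j (?p a) * ?q b + ?p a * pderiv_var j (?q b))"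
    by (subst mult_eq_sum_monom) (simp only: pderiv_var_sum pderiv_var_monom_mult)
  also have "\<dots> = pderiv_var j (sum ?p (keys p)) * sum ?q (keys q)
      + sum ?p (keys p) * pderiv_var j (sum ?q (keys q))"
    by (simp only: sum.distrib sum_product pderiv_var_sum)
  finally show ?thesis
    by (simp only: monom_def poly_mapping_sum_single)
qed

lemma pderiv_var_power: "pderiv_var j (p ^ Suc k) = of_nat (Suc k) * p ^ k * pderiv_var j p"
  by (induction k) (auto simp: pderiv_var_mult algebra_simps)

lemma keys_pderiv_var:
  assumes "m' \<in> keys (pderiv_var j p)"
  obtains m where "m \<in> keys p" "lookup m j \<noteq> 0" "m' = m - single j 1"
proof -
  have "keys (pderiv_var j p) \<subseteq> (\<Union>m\<in>keys p. keys (monom (m - single j 1) (of_nat (lookup m j) * lookup p m) :: 'a mpoly))"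
    unfolding pderiv_var_def by (rule keys_sum)
  with assms obtain m where "m \<in> keys p"
      "m' \<in> keys (monom (m - single j 1) (of_nat (lookup m j) * lookup p m) :: 'a mpoly)"
    by blast
  then show ?thesis
    by (intro that) (auto simp: monom_def split: if_splits intro: gr0I)
qed

lemma pderiv_var_polys: "p \<in> polys n \<Longrightarrow> pderiv_var j p \<in> polys n"
  unfolding pderiv_var_def
  by (intro polys_sum polys_monom) (auto simp: polys_def lookup_minus in_keys_iff)

lemma pderiv_var_iter_polys: "p \<in> polys n \<Longrightarrow> (pderiv_var j ^^ k) p \<in> polys n"
  by (induction k) (auto simp: pderiv_var_polys)

lemma pderiv_var_subst:
  fixes g :: "nat \<Rightarrow> 'a::comm_semiring_1 mpoly"
  assumes "p \<in> polys n"
  shows "pderiv_var j (subst g p) = (\<Sum>i<n. subst g (pderiv_var i p) * pderiv_var j (g i))"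
  using assms
proof (induction p rule: polys_induct)
  case (const c)
  then show ?case by (simp add: subst_const pderiv_var_const)
next
  case (Var l)
  have "(\<Sum>i<n. subst g (pderiv_var i (Var l)) * pderiv_var j (g i))
      = (\<Sum>i\<in>{l}. subst g (pderiv_var i (Var l)) * pderiv_var j (g i))"
    by (intro sum.mono_neutral_right) (use Var in \<open>auto simp: pderiv_var_Var\<close>)
  then show ?case by (simp add: subst_Var pderiv_var_Var)
next
  case (add p q)
  then show ?case by (simp add: subst_add pderiv_var_add sum.distrib distrib_right)
next
  case (mult p q)
  then show ?case
    by (simp add: subst_mult subst_add pderiv_var_mult sum_distrib_left sum_distrib_right
        sum.distrib algebra_simps)
qed

lemma pderiv_var_iter_power_mult:
  fixes R S :: "'a::comm_ring_1 mpoly"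
  assumes "i \<le> k"
  shows "\<exists>T. (pderiv_var j ^^ i) (R ^ k * S)
           = R ^ (k - i) * (of_nat (\<Prod>t<i. k - t) * pderiv_var j R ^ i * S + R * T)"
  using assms
proof (induction i)
  case 0
  then show ?case by (intro exI[of _ 0]) simp
next
  case (Suc i)
  then obtain T where T: "(pderiv_var j ^^ i) (R ^ k * S)
      = R ^ (k - i) * (of_nat (\<Prod>t<i. k - t) * pderiv_var j R ^ i * S + R * T)"
    by auto
  define m where "m = k - Suc i"
  define A where "A = of_nat (\<Prod>t<i. k - t) * pderiv_var j R ^ i * S + R * T"
  have km: "k - i = Suc m"
    using Suc.prems by (simp add: m_def)
  have "(pderiv_var j ^^ Suc i) (R ^ k * S) = pderiv_var j (R ^ Suc m * A)"
    using T by (simp add: km A_def)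
  also have "\<dots> = of_nat (Suc m) * R ^ m * pderiv_var j R * A + R ^ Suc m * pderiv_var j A"
    by (simp only: pderiv_var_mult pderiv_var_power)
  also have "\<dots> = R ^ m * (of_nat (\<Prod>t<Suc i. k - t) * pderiv_var j R ^ Suc i * S
      + R * (of_nat (Suc m) * pderiv_var j R * T + pderiv_var j A))"
    using km by (simp add: A_def algebra_simps)
  finally show ?case
    by (auto simp: m_def)
qed

section \<open>Weighted degrees and homogeneous parts\<close>

definition wdeg_bounded :: "(nat \<Rightarrow> nat) \<Rightarrow> int \<Rightarrow> 'a::zero mpoly \<Rightarrow> bool" where
  "wdeg_bounded w B p \<longleftrightarrow> (\<forall>m\<in>keys p. int (mon_wdeg w m) \<le> B)"

definition homogeneous :: "(nat \<Rightarrow> nat) \<Rightarrow> int \<Rightarrow> 'a::zero mpoly \<Rightarrow> bool" where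
  "homogeneous w e p \<longleftrightarrow> (\<forall>m\<in>keys p. int (mon_wdeg w m) = e)"

definition hom_part :: "(nat \<Rightarrow> nat) \<Rightarrow> int \<Rightarrow> 'a::comm_monoid_add mpoly \<Rightarrow> 'a mpoly" where
  "hom_part w e p = (\<Sum>m\<in>{m \<in> keys p. int (mon_wdeg w m) = e}. monom m (lookup p m))"

text \<open>Unlike \<open>top_comp\<close>, the form \<open>h\<close> may vanish here; this makes the notion stable
  under sums and products.\<close>

definition leading_form :: "(nat \<Rightarrow> nat) \<Rightarrow> int \<Rightarrow> 'a::comm_monoid_add mpoly \<Rightarrow> 'a mpoly \<Rightarrow> bool" where
  "leading_form w a p h \<longleftrightarrow> wdeg_bounded w a p \<and> hom_part w a p = h"

lemma mon_wdeg_superset: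
  "finite S \<Longrightarrow> keys m \<subseteq> S \<Longrightarrow> mon_wdeg w m = (\<Sum>i\<in>S. w i * lookup m i)"
  unfolding mon_wdeg_def by (intro sum.mono_neutral_left) (auto simp: in_keys_iff)

lemma mon_wdeg_add: "mon_wdeg w (a + b) = mon_wdeg w a + mon_wdeg w b"
proof -
  let ?S = "keys a \<union> keys b"
  have "mon_wdeg w (a + b) = (\<Sum>i\<in>?S. w i * lookup (a + b) i)"
    by (rule mon_wdeg_superset) (auto simp: keys_plus_nat)
  also have "\<dots> = (\<Sum>i\<in>?S. w i * lookup a i) + (\<Sum>i\<in>?S. w i * lookup b i)"
    by (simp add: lookup_add distrib_left sum.distrib)
  finally show ?thesis
    using mon_wdeg_superset[of ?S a w] mon_wdeg_superset[of ?S b w] by simp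
qed

lemma mon_wdeg_zero [simp]: "mon_wdeg w 0 = 0"
  by (simp add: mon_wdeg_def)

lemma mon_wdeg_single: "mon_wdeg w (single i e) = w i * e"
  by (simp add: mon_wdeg_def)

lemma mon_wdeg_minus_single:
  assumes "lookup m j \<noteq> 0"
  shows "mon_wdeg w m = mon_wdeg w (m - single j 1) + w j"
proof -
  have "m = (m - single j 1) + single j 1"
    by (rule poly_mapping_eqI) (use assms in \<open>auto simp: lookup_add lookup_minus lookup_single when_def\<close>)
  then show ?thesis
    by (metis mon_wdeg_add mon_wdeg_single mult_1_right)
qed

lemma lookup_hom_part: "lookup (hom_part w e p) m = (if int (mon_wdeg w m) = e then lookup p m else 0)"
proof -
  have "lookup (hom_part w e p) m = (\<Sum>m'\<in>{m' \<in> keys p. int (mon_wdeg w m') = e}. (lookup p m' when m' = m))"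
    by (simp add: hom_part_def lookup_sum monom_def lookup_single)
  also have "\<dots> = (\<Sum>m'\<in>{m' \<in> keys p. int (mon_wdeg w m') = e} \<inter> {m}. lookup p m')"
    by (simp add: sum.inter_restrict when_def)
  finally show ?thesis
    by (cases "m \<in> keys p") (auto simp: in_keys_iff)
qed

lemma keys_hom_part: "keys (hom_part w e p) = {m \<in> keys p. int (mon_wdeg w m) = e}"
  by (auto simp: in_keys_iff lookup_hom_part split: if_splits)

lemma top_comp_zero [simp]: "top_comp w 0 = 0"
  by (simp add: top_comp_def)

lemma top_comp_eq_hom_part: "top_comp w p = hom_part w (wdeg w p) p"
  by (simp add: top_comp_def hom_part_def)

lemma hom_part_add: "hom_part w e (p + q) = hom_part w e p + hom_part w e q"
  by (rule poly_mapping_eqI) (simp add: lookup_hom_part lookup_add)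

lemma hom_part_homogeneous: "homogeneous w e p \<Longrightarrow> hom_part w e p = p"
  by (rule poly_mapping_eqI) (auto simp: lookup_hom_part homogeneous_def in_keys_iff)

lemma hom_part_eq_0: "wdeg_bounded w (e - 1) p \<Longrightarrow> hom_part w e p = 0"
  by (rule poly_mapping_eqI) (force simp: lookup_hom_part wdeg_bounded_def in_keys_iff)

lemma homogeneous_hom_part: "homogeneous w e (hom_part w e p)"
  by (simp add: homogeneous_def keys_hom_part)

lemma homogeneous_mult: "homogeneous w a p \<Longrightarrow> homogeneous w b q \<Longrightarrow> homogeneous w (a + b) (p * q)"
  using keys_mult[of p q] by (fastforce simp: homogeneous_def mon_wdeg_add)

lemma wdeg_bounded_if_homogeneous: "homogeneous w e p \<Longrightarrow> wdeg_bounded w e p"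
  by (simp add: homogeneous_def wdeg_bounded_def)

lemma wdeg_bounded_diff_hom_part:
  "wdeg_bounded w e p \<Longrightarrow> wdeg_bounded w (e - 1) (p - hom_part w e p :: 'a::comm_ring_1 mpoly)"
  by (force simp: wdeg_bounded_def in_keys_iff lookup_minus lookup_hom_part split: if_splits)

lemma wdeg_bounded_zero [simp]: "wdeg_bounded w B 0"
  by (simp add: wdeg_bounded_def)

lemma wdeg_bounded_mono: "wdeg_bounded w A p \<Longrightarrow> A \<le> B \<Longrightarrow> wdeg_bounded w B p"
  by (auto simp: wdeg_bounded_def)

lemma wdeg_bounded_add: "wdeg_bounded w B p \<Longrightarrow> wdeg_bounded w B q \<Longrightarrow> wdeg_bounded w B (p + q)"
  using keys_add[of p q] by (auto simp: wdeg_bounded_def)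

lemma wdeg_bounded_sum: "(\<And>x. x \<in> S \<Longrightarrow> wdeg_bounded w B (f x)) \<Longrightarrow> wdeg_bounded w B (sum f S)"
  by (induction S rule: infinite_finite_induct) (auto simp: wdeg_bounded_add)

lemma wdeg_bounded_mult:
  "wdeg_bounded w A p \<Longrightarrow> wdeg_bounded w B q \<Longrightarrow> wdeg_bounded w (A + B) (p * q)"
  using keys_mult[of p q] by (fastforce simp: wdeg_bounded_def mon_wdeg_add)

lemma wdeg_bounded_const: "wdeg_bounded w 0 (monom 0 c)"
  by (simp add: wdeg_bounded_def monom_def)

lemma wdeg_bounded_one: "wdeg_bounded w 0 (1 :: 'a::comm_semiring_1 mpoly)"
  by (simp add: wdeg_bounded_def)

lemma wdeg_bounded_prod:
  "(\<And>x. x \<in> S \<Longrightarrow> wdeg_bounded w (B x) (f x :: 'a::comm_semiring_1 mpoly))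
    \<Longrightarrow> wdeg_bounded w (sum B S) (prod f S)"
  by (induction S rule: infinite_finite_induct) (simp_all add: wdeg_bounded_mult wdeg_bounded_one)

lemma hom_part_mult:
  fixes p q :: "'a::comm_ring_1 mpoly"
  assumes "wdeg_bounded w a p" "wdeg_bounded w b q"
  shows "hom_part w (a + b) (p * q) = hom_part w a p * hom_part w b q"
proof -
  define h h' where "h = hom_part w a p" and "h' = hom_part w b q"
  have "wdeg_bounded w (a - 1 + b) ((p - h) * q)"
    using assms unfolding h_def by (intro wdeg_bounded_mult wdeg_bounded_diff_hom_part)
  moreover have "wdeg_bounded w (a + (b - 1)) (h * (q - h'))"
    unfolding h_def h'_def by (intro wdeg_bounded_mult wdeg_bounded_diff_hom_part[OF assms(2)]
      wdeg_bounded_if_homogeneous[OF homogeneous_hom_part])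
  ultimately have "hom_part w (a + b) ((p - h) * q) = 0" "hom_part w (a + b) (h * (q - h')) = 0"
    by (auto intro!: hom_part_eq_0 elim: wdeg_bounded_mono)
  moreover have "hom_part w (a + b) (h * h') = h * h'"
    unfolding h_def h'_def by (intro hom_part_homogeneous homogeneous_mult homogeneous_hom_part)
  moreover have "p * q = h * h' + ((p - h) * q + h * (q - h'))"
    by (simp add: algebra_simps)
  ultimately show ?thesis
    by (metis h_def h'_def hom_part_add add.right_neutral)
qed

lemma leading_form_mult:
  "leading_form w a p h \<Longrightarrow> leading_form w b q h'
    \<Longrightarrow> leading_form w (a + b) (p * q :: 'a::comm_ring_1 mpoly) (h * h')"
  unfolding leading_form_def using hom_part_mult wdeg_bounded_mult by blast

lemma leading_form_add:
  "leading_form w a p h \<Longrightarrow> leading_form w a q h' \<Longrightarrow> leading_form w a (p + q) (h + h')"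
  by (simp add: leading_form_def hom_part_add wdeg_bounded_add)

lemma leading_form_zero: "leading_form w a 0 0"
  by (simp add: leading_form_def hom_part_def)

lemma leading_form_sum:
  "(\<And>x. x \<in> S \<Longrightarrow> leading_form w a (f x) (h x)) \<Longrightarrow> leading_form w a (sum f S) (sum h S)"
  by (induction S rule: infinite_finite_induct) (simp_all add: leading_form_add leading_form_zero)

lemma leading_form_const: "leading_form w 0 (monom 0 c) (monom 0 c)"
proof -
  have "homogeneous w 0 (monom 0 c)"
    by (simp add: homogeneous_def monom_def)
  then show ?thesis
    by (simp add: leading_form_def wdeg_bounded_if_homogeneous hom_part_homogeneous)
qed

lemma leading_form_one: "leading_form w 0 (1 :: 'a::comm_semiring_1 mpoly) 1"
  by (metis leading_form_const monom_const_one)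

lemma leading_form_prod:
  "(\<And>x. x \<in> S \<Longrightarrow> leading_form w (a x) (f x :: 'a::comm_ring_1 mpoly) (h x))
    \<Longrightarrow> leading_form w (sum a S) (prod f S) (prod h S)"
  by (induction S rule: infinite_finite_induct)
    (simp_all add: leading_form_mult leading_form_one)

lemma leading_form_power:
  "leading_form w a (p :: 'a::comm_ring_1 mpoly) h \<Longrightarrow> leading_form w (int k * a) (p ^ k) (h ^ k)"
  using leading_form_prod[of "{..<k}" w "\<lambda>_. a" "\<lambda>_. p" "\<lambda>_. h"] by simp

lemma leading_form_zero_above:
  assumes "leading_form w a p h" "a < b"
  shows "leading_form w b p 0"
proof -
  have "wdeg_bounded w a p"
    using assms(1) by (simp add: leading_form_def)
  then have "wdeg_bounded w (b - 1) p" "wdeg_bounded w b p"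
    using assms(2) by (auto elim: wdeg_bounded_mono)
  then show ?thesis
    by (simp add: leading_form_def hom_part_eq_0)
qed

lemma wdeg_one: "wdeg w (1 :: 'a::comm_semiring_1 mpoly) = 0"
  by (simp add: wdeg_def)

lemma wdeg_nonneg: "0 \<le> wdeg w p"
  by (simp add: wdeg_def)

lemma tdeg_nonneg: "0 \<le> tdeg p"
  by (simp add: tdeg_def wdeg_nonneg)

lemma mon_wdeg_le_wdeg: "m \<in> keys p \<Longrightarrow> int (mon_wdeg w m) \<le> wdeg w p"
  by (simp add: wdeg_def)

lemma wdeg_bounded_wdeg: "wdeg_bounded w (wdeg w p) p"
  by (simp add: wdeg_bounded_def mon_wdeg_le_wdeg)

lemma wdeg_le: "wdeg_bounded w B p \<Longrightarrow> p \<noteq> 0 \<Longrightarrow> wdeg w p \<le> B"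
proof -
  assume B: "wdeg_bounded w B p" and "p \<noteq> 0"
  then obtain m where "m \<in> keys p"
    by (metis all_not_in_conv keys_eq_empty)
  with B have "\<forall>x\<in>insert 0 (mon_wdeg w ` keys p). int x \<le> B"
    by (force simp: wdeg_bounded_def)
  moreover have "Max (insert 0 (mon_wdeg w ` keys p)) \<in> insert 0 (mon_wdeg w ` keys p)"
    by (rule Max_in) auto
  ultimately show ?thesis
    unfolding wdeg_def by blast
qed

lemma top_comp_nonzero: "p \<noteq> 0 \<Longrightarrow> top_comp w p \<noteq> 0"
proof -
  assume "p \<noteq> 0"
  then have "keys p \<noteq> {}" by simp
  then have "Max (insert 0 (mon_wdeg w ` keys p)) \<in> mon_wdeg w ` keys p"
    by (simp add: Max_insert max_def Max_in)
  then obtain m where "m \<in> keys p" "int (mon_wdeg w m) = wdeg w p"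
    by (auto simp: wdeg_def)
  then have "m \<in> keys (top_comp w p)"
    by (simp add: top_comp_eq_hom_part keys_hom_part)
  then show ?thesis by auto
qed

lemma leading_form_top_comp: "leading_form w (wdeg w p) p (top_comp w p)"
  by (simp add: leading_form_def wdeg_bounded_wdeg top_comp_eq_hom_part)

lemma leading_form_imp_top_comp:
  assumes "leading_form w a p h" "h \<noteq> 0"
  shows "wdeg w p = a" "top_comp w p = h"
proof -
  obtain m where "m \<in> keys (hom_part w a p)"
    using assms by (metis all_not_in_conv keys_eq_empty leading_form_def)
  then have "a \<le> wdeg w p"
    by (metis (mono_tags) keys_hom_part mem_Collect_eq mon_wdeg_le_wdeg)
  moreover have "p \<noteq> 0"
    using assms by (auto simp: leading_form_def hom_part_def)
  then have "wdeg w p \<le> a"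
    using assms wdeg_le by (auto simp: leading_form_def)
  ultimately show "wdeg w p = a" by simp
  then show "top_comp w p = h"
    using assms by (simp add: leading_form_def top_comp_eq_hom_part)
qed

lemma wdeg_mult:
  fixes p q :: "'a::idom mpoly"
  assumes "p \<noteq> 0" "q \<noteq> 0"
  shows "wdeg w (p * q) = wdeg w p + wdeg w q"
proof (rule leading_form_imp_top_comp)
  show "leading_form w (wdeg w p + wdeg w q) (p * q) (top_comp w p * top_comp w q)"
    by (intro leading_form_mult leading_form_top_comp)
  show "top_comp w p * top_comp w q \<noteq> 0"
    using assms top_comp_nonzero by auto
qed

lemma wdeg_power: "(R :: 'a::idom mpoly) \<noteq> 0 \<Longrightarrow> wdeg w (R ^ k) = int k * wdeg w R"
proof (induction k)
  case 0
  then show ?case by (simp add: wdeg_one)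
next
  case (Suc k)
  then show ?case by (simp add: wdeg_mult algebra_simps)
qed

section \<open>Degrees of derivatives and of substitutions\<close>

lemma wdeg_bounded_pderiv_var:
  assumes "wdeg_bounded w B p"
  shows "wdeg_bounded w (B - int (w j)) (pderiv_var j p)"
  unfolding wdeg_bounded_def
proof
  fix m' assume "m' \<in> keys (pderiv_var j p)"
  then obtain m where "m \<in> keys p" "lookup m j \<noteq> 0" "m' = m - single j 1"
    by (rule keys_pderiv_var)
  then show "int (mon_wdeg w m') \<le> B - int (w j)"
    using assms mon_wdeg_minus_single[of m j w] by (force simp: wdeg_bounded_def)
qed

lemma homogeneous_pderiv_var:
  assumes "homogeneous w e p"
  shows "homogeneous w (e - int (w j)) (pderiv_var j p)"
  unfolding homogeneous_def
proof
  fix m' assume "m' \<in> keys (pderiv_var j p)"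
  then obtain m where "m \<in> keys p" "lookup m j \<noteq> 0" "m' = m - single j 1"
    by (rule keys_pderiv_var)
  then show "int (mon_wdeg w m') = e - int (w j)"
    using assms mon_wdeg_minus_single[of m j w] by (force simp: homogeneous_def)
qed

lemma leading_form_pderiv_var:
  fixes p :: "'a::comm_ring_1 mpoly"
  assumes "leading_form w a p h"
  shows "leading_form w (a - int (w j)) (pderiv_var j p) (pderiv_var j h)"
proof -
  have B: "wdeg_bounded w a p" and h: "h = hom_part w a p"
    using assms by (auto simp: leading_form_def)
  have "hom_part w (a - int (w j)) (pderiv_var j h) = pderiv_var j h"
    unfolding h by (intro hom_part_homogeneous homogeneous_pderiv_var homogeneous_hom_part)
  moreover have "hom_part w (a - int (w j)) (pderiv_var j (p - h)) = 0"
    using wdeg_bounded_pderiv_var[OF wdeg_bounded_diff_hom_part[OF B], of j]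
    by (intro hom_part_eq_0) (simp add: h algebra_simps)
  moreover have "pderiv_var j p = pderiv_var j h + pderiv_var j (p - h)"
    by (simp add: pderiv_var_diff)
  ultimately show ?thesis
    using wdeg_bounded_pderiv_var[OF B, of j] by (simp add: leading_form_def hom_part_add)
qed

lemma leading_form_pderiv_var_iter:
  fixes p :: "'a::comm_ring_1 mpoly"
  assumes "leading_form w a p h"
  shows "leading_form w (a - int k * int (w j)) ((pderiv_var j ^^ k) p) ((pderiv_var j ^^ k) h)"
proof (induction k)
  case 0
  then show ?case using assms by simp
next
  case (Suc k)
  then show ?case
    using leading_form_pderiv_var[OF Suc.IH, of j] by (simp add: algebra_simps)
qed

lemma not_dvd_pderiv_var:
  fixes R :: "'a::idom mpoly"
  assumes "pderiv_var j R \<noteq> 0"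
  shows "\<not> R dvd pderiv_var j R"
proof
  assume "R dvd pderiv_var j R"
  then obtain s where s: "pderiv_var j R = R * s" ..
  define w where "w = (\<lambda>i. if i = j then 1 else 0 :: nat)"
  have "R \<noteq> 0" "s \<noteq> 0"
    using assms s by auto
  then have "wdeg w (pderiv_var j R) = wdeg w R + wdeg w s"
    by (simp add: s wdeg_mult)
  moreover have "wdeg w (pderiv_var j R) \<le> wdeg w R - 1"
    using wdeg_le[OF wdeg_bounded_pderiv_var[OF wdeg_bounded_wdeg[of w R]] assms] by (simp add: w_def)
  ultimately show False
    using wdeg_nonneg[of w s] by simp
qed

lemma leading_form_power_product:
  assumes "\<And>i. leading_form w (int (d i)) (f i) (h i)"
  shows "leading_form w (int (mon_wdeg d m)) (power_product f m :: 'a::comm_ring_1 mpoly) (power_product h m)"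
proof -
  have "leading_form w (\<Sum>i\<in>keys m. int (lookup m i) * int (d i)) (power_product f m) (power_product h m)"
    unfolding power_product_def by (intro leading_form_prod leading_form_power assms)
  then show ?thesis
    by (simp add: mon_wdeg_def mult.commute)
qed

text \<open>Substituting forms of degrees \<open>d\<^sub>i\<close> into \<open>Q\<close>: only the top \<open>d\<close>-weighted component of \<open>Q\<close>
  can reach degree \<open>wdeg d Q\<close>.\<close>

lemma leading_form_subst:
  assumes "\<And>i. leading_form w (int (d i)) (f i) (h i)"
  shows "leading_form w (wdeg d Q) (subst f Q :: 'a::comm_ring_1 mpoly) (subst h (top_comp d Q))"
proof -
  let ?h = "\<lambda>m. if int (mon_wdeg d m) = wdeg d Q then monom 0 (lookup Q m) * power_product h m else 0"
  have "leading_form w (wdeg d Q) (subst f Q) (\<Sum>m\<in>keys Q. ?h m)"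
    unfolding subst_def power_product_def[symmetric]
  proof (rule leading_form_sum)
    fix m assume m: "m \<in> keys Q"
    have lf: "leading_form w (0 + int (mon_wdeg d m))
        (monom 0 (lookup Q m) * power_product f m) (monom 0 (lookup Q m) * power_product h m)"
      by (intro leading_form_mult leading_form_const leading_form_power_product assms)
    show "leading_form w (wdeg d Q) (monom 0 (lookup Q m) * power_product f m) (?h m)"
    proof (cases "int (mon_wdeg d m) = wdeg d Q")
      case True
      then show ?thesis using lf by simp
    next
      case False
      then have "int (mon_wdeg d m) < wdeg d Q"
        using mon_wdeg_le_wdeg[OF m, of d] by simp
      then show ?thesis
        using leading_form_zero_above[OF lf] False by simp
    qed
  qed
  moreover have "(\<Sum>m\<in>keys Q. ?h m) = subst h (top_comp d Q)"
    unfolding top_comp_def subst_sum subst_monom by (simp add: sum.inter_filter[symmetric])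
  ultimately show ?thesis by simp
qed

lemma tdeg_subst_eq_wdeg:
  fixes f :: "nat \<Rightarrow> 'a::comm_ring_1 mpoly"
  assumes "subst (\<lambda>i. hbar (f i)) (top_comp (\<lambda>i. nat (tdeg (f i))) Q) \<noteq> 0"
  shows "tdeg (subst f Q) = wdeg (\<lambda>i. nat (tdeg (f i))) Q"
proof -
  have "leading_form (\<lambda>_. 1) (int (nat (tdeg (f i)))) (f i) (hbar (f i))" for i
    using leading_form_top_comp[of "\<lambda>_. 1" "f i"] wdeg_nonneg[of "\<lambda>_. 1" "f i"]
    by (simp add: tdeg_def hbar_def)
  from leading_form_imp_top_comp(1)[OF leading_form_subst[OF this] assms] show ?thesis
    by (simp add: tdeg_def)
qed

section \<open>The Jacobian matrix of a polynomial automorphism\<close>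

definition jacobian_mat :: "nat \<Rightarrow> (nat \<Rightarrow> 'a::comm_semiring_1 mpoly) \<Rightarrow> 'a mpoly mat" where
  "jacobian_mat n f = mat n n (\<lambda>(i, l). pderiv_var l (f i))"

lemma wdeg_bounded_of_int: "wdeg_bounded w 0 (of_int z :: 'a::comm_ring_1 mpoly)"
  by (metis wdeg_bounded_const monom_const_of_int)

lemma wdeg_bounded_det:
  fixes A :: "'a::comm_ring_1 mpoly mat"
  assumes A: "A \<in> carrier_mat m m"
    and e: "\<And>i j. i < m \<Longrightarrow> j < m \<Longrightarrow> wdeg_bounded w (e i) (A $$ (i, j))"
  shows "wdeg_bounded w (\<Sum>i<m. e i) (det A)"
proof -
  have "wdeg_bounded w (0 + (\<Sum>i = 0..<m. e i)) (signof p * (\<Prod>i = 0..<m. A $$ (i, p i)))"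
    if "p permutes {0..<m}" for p
    using that by (intro wdeg_bounded_mult wdeg_bounded_of_int wdeg_bounded_prod e)
      (auto simp: permutes_in_image)
  then show ?thesis
    unfolding det_def'[OF A] by (intro wdeg_bounded_sum) (simp add: atLeast0LessThan)
qed

lemma tdeg_bounded_cofactor_jacobian:
  fixes f :: "nat \<Rightarrow> 'a::comm_ring_1 mpoly"
  assumes "j < n"
  shows "wdeg_bounded (\<lambda>_. 1) ((\<Sum>r<n. tdeg (f r)) - int n - tdeg (f j) + 1)
           (cofactor (jacobian_mat n f) j i)"
proof -
  let ?e = "\<lambda>r. tdeg (f r) - 1"
  have "wdeg_bounded (\<lambda>_. 1) (\<Sum>r<n-1. ?e (insert_index j r)) (det (mat_delete (jacobian_mat n f) j i))"
  proof (rule wdeg_bounded_det)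
    show "mat_delete (jacobian_mat n f) j i \<in> carrier_mat (n - 1) (n - 1)"
      by (rule mat_delete_carrier) (simp add: jacobian_mat_def)
    fix r c assume "r < n - 1" "c < n - 1"
    then have "mat_delete (jacobian_mat n f) j i $$ (r, c) = pderiv_var (insert_index i c) (f (insert_index j r))"
      by (simp add: mat_delete_def jacobian_mat_def insert_index_def)
    then show "wdeg_bounded (\<lambda>_. 1) (?e (insert_index j r)) (mat_delete (jacobian_mat n f) j i $$ (r, c))"
      using wdeg_bounded_pderiv_var[OF wdeg_bounded_wdeg[of "\<lambda>_. 1" "f (insert_index j r)"],
          of "insert_index i c"]
      by (simp add: tdeg_def)
  qed
  moreover have "(\<Sum>r<n-1. ?e (insert_index j r)) = (\<Sum>r<n. tdeg (f r)) - int n - tdeg (f j) + 1"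
  proof -
    have "(\<Sum>r<n-1. ?e (insert_index j r)) = (\<Sum>r\<in>insert_index j ` {0..<n-1}. ?e r)"
      by (simp add: sum.reindex[OF insert_index_inj_on] lessThan_atLeast0)
    also have "\<dots> = (\<Sum>r\<in>{0..<n} - {j}. ?e r)"
      using insert_index_image[of j "n - 1"] assms by simp
    also have "\<dots> = (\<Sum>r<n. tdeg (f r)) - int n - tdeg (f j) + 1"
      using assms by (simp add: sum_diff1 lessThan_atLeast0 sum_subtractf)
    finally show ?thesis .
  qed
  ultimately have "wdeg_bounded (\<lambda>_. 1) ((\<Sum>r<n. tdeg (f r)) - int n - tdeg (f j) + 1)
      (det (mat_delete (jacobian_mat n f) j i))"
    by simp
  from wdeg_bounded_mult[OF wdeg_bounded_of_int[of _ "(-1) ^ (j + i)"] this] show ?thesis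
    by (simp add: cofactor_def)
qed

locale poly_automorphism_pair =
  fixes n :: nat and f g :: "nat \<Rightarrow> 'a::field mpoly"
  assumes f_polys: "\<And>i. i < n \<Longrightarrow> f i \<in> polys n"
    and g_polys: "\<And>i. i < n \<Longrightarrow> g i \<in> polys n"
    and subst_g_f: "\<And>i. i < n \<Longrightarrow> subst g (f i) = Var i"
    and subst_f_g: "\<And>i. i < n \<Longrightarrow> subst f (g i) = Var i"
begin

lemma subst_g_subst_f: "X \<in> polys n \<Longrightarrow> subst g (subst f X) = X"
  by (simp add: subst_subst subst_cong[where h=Var] subst_g_f subst_Var_id)

lemma subst_f_subst_g: "X \<in> polys n \<Longrightarrow> subst f (subst g X) = X"
  by (simp add: subst_subst subst_cong[where h=Var] subst_f_g subst_Var_id)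

lemma subst_f_nonzero: "X \<in> polys n \<Longrightarrow> X \<noteq> 0 \<Longrightarrow> subst f X \<noteq> 0"
  by (metis subst_g_subst_f subst_zero)

abbreviation jac :: "'a mpoly mat" where
  "jac \<equiv> jacobian_mat n f"

abbreviation inv_jac :: "'a mpoly mat" where
  "inv_jac \<equiv> map_mat (subst f) (jacobian_mat n g)"

lemma inv_jac_mult_jac: "inv_jac * jac = 1\<^sub>m n"
proof (rule eq_matI)
  fix i l assume "i < dim_row (1\<^sub>m n :: 'a mpoly mat)" "l < dim_col (1\<^sub>m n :: 'a mpoly mat)"
  then have i: "i < n" and l: "l < n" by auto
  have "(inv_jac * jac) $$ (i, l) = (\<Sum>j<n. subst f (pderiv_var j (g i)) * pderiv_var l (f j))"
    using i l by (simp add: jacobian_mat_def scalar_prod_def atLeast0LessThan)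
  also have "\<dots> = pderiv_var l (subst f (g i))"
    by (simp add: pderiv_var_subst[OF g_polys[OF i]])
  finally show "(inv_jac * jac) $$ (i, l) = 1\<^sub>m n $$ (i, l)"
    using i l by (simp add: subst_f_g pderiv_var_Var)
qed (auto simp: jacobian_mat_def)

lemma det_jac: "det jac \<noteq> 0" "tdeg (det jac) = 0"
proof -
  have "det inv_jac * det jac = 1"
    using det_mult[of inv_jac n jac] inv_jac_mult_jac by (simp add: jacobian_mat_def)
  then have nz: "det inv_jac \<noteq> 0" "det jac \<noteq> 0"
    by auto
  then have "wdeg (\<lambda>_. 1) (det inv_jac) + tdeg (det jac) = 0"
    using wdeg_mult[OF nz] \<open>det inv_jac * det jac = 1\<close> by (simp add: tdeg_def wdeg_one)
  then show "det jac \<noteq> 0" "tdeg (det jac) = 0"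
    using nz wdeg_nonneg[of "\<lambda>_. 1" "det jac"] wdeg_nonneg[of "\<lambda>_. 1" "det inv_jac"]
    by (simp_all add: tdeg_def)
qed

lemma det_jac_mult_inv_jac:
  assumes "i < n" "j < n"
  shows "det jac * inv_jac $$ (i, j) = cofactor jac j i"
proof -
  have J: "jac \<in> carrier_mat n n" and N: "inv_jac \<in> carrier_mat n n"
    by (auto simp: jacobian_mat_def)
  have "adj_mat jac = (inv_jac * jac) * adj_mat jac"
    using adj_mat(1)[OF J] by (simp add: inv_jac_mult_jac)
  also have "\<dots> = inv_jac * (jac * adj_mat jac)"
    by (rule assoc_mult_mat[OF N J adj_mat(1)[OF J]])
  also have "\<dots> = det jac \<cdot>\<^sub>m inv_jac"
    using N by (simp add: adj_mat(2)[OF J] mult_smult_distrib[OF N one_carrier_mat])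
  finally have "adj_mat jac $$ (i, j) = (det jac \<cdot>\<^sub>m inv_jac) $$ (i, j)"
    by simp
  then show ?thesis
    using assms by (simp add: adj_mat_def jacobian_mat_def)
qed

lemma tdeg_bounded_inv_jac:
  assumes "i < n" "j < n"
  shows "wdeg_bounded (\<lambda>_. 1) ((\<Sum>r<n. tdeg (f r)) - int n - tdeg (f j) + 1) (inv_jac $$ (i, j))"
proof (cases "inv_jac $$ (i, j) = 0")
  case False
  have "wdeg (\<lambda>_. 1) (inv_jac $$ (i, j)) = wdeg (\<lambda>_. 1) (cofactor jac j i)"
    using wdeg_mult[OF det_jac(1) False] det_jac(2) by (simp add: tdeg_def det_jac_mult_inv_jac[OF assms])
  also have "\<dots> \<le> (\<Sum>r<n. tdeg (f r)) - int n - tdeg (f j) + 1"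
    using det_jac(1) False det_jac_mult_inv_jac[OF assms]
    by (intro wdeg_le[OF tdeg_bounded_cofactor_jacobian[OF assms(2)]]) auto
  finally show ?thesis
    using wdeg_bounded_wdeg wdeg_bounded_mono by blast
qed simp

text \<open>Since \<open>\<partial>Q/\<partial>x\<^sub>j = \<Sum>\<^sub>i (\<partial>G/\<partial>x\<^sub>i \<circ> g) \<cdot> \<partial>g\<^sub>i/\<partial>x\<^sub>j\<close> for \<open>G = Q \<circ> f\<close>, composing with \<open>f\<close> expresses
  \<open>\<partial>Q/\<partial>x\<^sub>j \<circ> f\<close> through derivatives of \<open>G\<close> and the entries of \<open>inv_jac\<close>.\<close>

lemma tdeg_subst_pderiv_var_le:
  assumes Q: "Q \<in> polys n" and j: "j < n" and nz: "pderiv_var j Q \<noteq> 0"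
  shows "tdeg (subst f (pderiv_var j Q)) \<le> tdeg (subst f Q) + ((\<Sum>r<n. tdeg (f r)) - int n) - tdeg (f j)"
proof -
  define G where "G = subst f Q"
  have G: "G \<in> polys n"
    unfolding G_def using Q f_polys by (rule subst_polys)
  have "pderiv_var j Q = (\<Sum>i<n. subst g (pderiv_var i G) * pderiv_var j (g i))"
    using pderiv_var_subst[OF G, of j g] by (simp add: G_def subst_g_subst_f[OF Q])
  then have eq: "subst f (pderiv_var j Q) = (\<Sum>i<n. pderiv_var i G * inv_jac $$ (i, j))"
    using j by (simp add: subst_sum subst_mult subst_f_subst_g[OF pderiv_var_polys[OF G]] jacobian_mat_def)
  have "wdeg_bounded (\<lambda>_. 1) (tdeg G - 1 + ((\<Sum>r<n. tdeg (f r)) - int n - tdeg (f j) + 1))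
      (\<Sum>i<n. pderiv_var i G * inv_jac $$ (i, j))"
    using wdeg_bounded_pderiv_var[OF wdeg_bounded_wdeg[of "\<lambda>_. 1" G]] tdeg_bounded_inv_jac j
    by (intro wdeg_bounded_sum wdeg_bounded_mult) (simp_all add: tdeg_def)
  then have "wdeg_bounded (\<lambda>_. 1) (tdeg G - 1 + ((\<Sum>r<n. tdeg (f r)) - int n - tdeg (f j) + 1))
      (subst f (pderiv_var j Q))"
    by (simp only: eq)
  from wdeg_le[OF this subst_f_nonzero[OF pderiv_var_polys[OF Q] nz]] show ?thesis
    by (simp add: tdeg_def G_def)
qed

lemma tdeg_subst_pderiv_var_iter_le:
  assumes P: "P \<in> polys n" and j: "j < n" and nz: "(pderiv_var j ^^ k) P \<noteq> 0"
  shows "tdeg (subst f ((pderiv_var j ^^ k) P))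
           \<le> tdeg (subst f P) + int k * ((\<Sum>r<n. tdeg (f r)) - int n - tdeg (f j))"
  using nz
proof (induction k)
  case (Suc k)
  then have "(pderiv_var j ^^ k) P \<noteq> 0"
    by (metis funpow.simps(2) o_apply pderiv_var_zero)
  moreover have "tdeg (subst f ((pderiv_var j ^^ Suc k) P))
      \<le> tdeg (subst f ((pderiv_var j ^^ k) P)) + ((\<Sum>r<n. tdeg (f r)) - int n - tdeg (f j))"
    using tdeg_subst_pderiv_var_le[OF pderiv_var_iter_polys[OF P, where j=j and k=k] j] Suc.prems
    by (simp add: algebra_simps)
  ultimately show ?case
    using Suc.IH by (simp add: algebra_simps)
qed simp

end


section \<open>Leading forms modulo the ideal of relations\<close>

lemma subst_pderiv_var_iter_power_mult:
  fixes R S :: "'a::comm_ring_1 mpoly"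
  assumes "subst h R = 0"
  shows "subst h ((pderiv_var j ^^ k) (R ^ k * S)) = of_nat (fact k) * subst h (pderiv_var j R) ^ k * subst h S"
proof -
  obtain T where T: "(pderiv_var j ^^ k) (R ^ k * S)
      = R ^ (k - k) * (of_nat (\<Prod>t<k. k - t) * pderiv_var j R ^ k * S + R * T)"
    using pderiv_var_iter_power_mult[of k k j R S] by auto
  have "(\<Prod>t<k. k - t) = fact k"
    by (simp add: fact_prod_rev atLeast0LessThan)
  then have "(pderiv_var j ^^ k) (R ^ k * S) = of_nat (fact k) * pderiv_var j R ^ k * S + R * T"
    by (simp only: T diff_self_eq_0 power_0 mult_1_left)
  then show ?thesis
    using assms by (simp add: subst_add subst_mult subst_power subst_of_nat)
qed

lemma pideal_power_exact:
  assumes "T \<in> pideal n (R ^ k)" "T \<notin> pideal n (R ^ (k + 1))"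
  obtains S where "S \<in> polys n" "T = R ^ k * S" "S \<notin> pideal n R"
proof -
  obtain S where S: "S \<in> polys n" "T = R ^ k * S"
    using assms(1) by (auto simp: pideal_def)
  moreover have "S \<notin> pideal n R"
  proof
    assume "S \<in> pideal n R"
    then obtain s where "s \<in> polys n" "T = R ^ (k + 1) * s"
      using S(2) by (auto simp: pideal_def algebra_simps)
    then show False
      using assms(2) by (auto simp: pideal_def)
  qed
  ultimately show ?thesis by (rule that)
qed

text \<open>Modulo \<open>R\<close> the \<open>k\<close>-th derivative is \<open>k! (\<partial>R/\<partial>x\<^sub>j)\<^sup>k S\<close>; its image under \<open>h\<close> survives because
  the target is a domain of characteristic zero.\<close>

lemma subst_pderiv_var_iter_nonzero:
  fixes h :: "nat \<Rightarrow> 'a::field_char_0 mpoly"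
  assumes ker: "{Q \<in> polys n. subst h Q = 0} = pideal n R"
    and R: "R \<in> polys n" "pderiv_var j R \<noteq> 0"
    and S: "S \<in> polys n" "S \<notin> pideal n R"
  shows "subst h ((pderiv_var j ^^ k) (R ^ k * S)) \<noteq> 0"
proof -
  have "R \<in> pideal n R"
    using R(1) by (auto simp: pideal_def intro: exI[of _ 1])
  then have "subst h R = 0"
    using ker by blast
  moreover have "pderiv_var j R \<notin> pideal n R"
    using not_dvd_pderiv_var[OF R(2)] by (auto simp: pideal_def)
  then have "subst h (pderiv_var j R) \<noteq> 0"
    using ker pderiv_var_polys[OF R(1)] by blast
  moreover have "subst h S \<noteq> 0"
    using ker S by blast
  ultimately show ?thesis
    by (simp add: subst_pderiv_var_iter_power_mult)
qed

lemma top_comp_pderiv_var_iter: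
  fixes P :: "'a::comm_ring_1 mpoly"
  assumes "(pderiv_var j ^^ k) (top_comp w P) \<noteq> 0"
  shows "top_comp w ((pderiv_var j ^^ k) P) = (pderiv_var j ^^ k) (top_comp w P)"
    and "wdeg w ((pderiv_var j ^^ k) P) = wdeg w P - int k * int (w j)"
  using leading_form_imp_top_comp[OF leading_form_pderiv_var_iter[OF leading_form_top_comp] assms]
  by auto

lemma wdeg_top_comp: "wdeg w (top_comp w p) = wdeg w p"
proof (cases "p = 0")
  case False
  have "leading_form w (wdeg w p) (top_comp w p) (top_comp w p)"
    by (simp add: leading_form_def top_comp_eq_hom_part wdeg_bounded_if_homogeneous
        homogeneous_hom_part hom_part_homogeneous)
  then show ?thesis
    using leading_form_imp_top_comp(1) top_comp_nonzero[OF False] by blast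
qed simp

lemma wdeg_ge_top_comp_factor:
  fixes R S :: "'a::idom mpoly"
  assumes "top_comp w P = R ^ k * S" "P \<noteq> 0"
  shows "int k * wdeg w R \<le> wdeg w P"
proof -
  have "R ^ k * S \<noteq> 0"
    using assms top_comp_nonzero by metis
  then have "wdeg w (R ^ k) = int k * wdeg w R"
    by (cases "R = 0") (auto simp: wdeg_power wdeg_one)
  moreover have "wdeg w P = wdeg w (R ^ k) + wdeg w S"
    using wdeg_top_comp[of w P] assms(1) \<open>R ^ k * S \<noteq> 0\<close> by (simp add: wdeg_mult)
  ultimately have "wdeg w P = int k * wdeg w R + wdeg w S"
    by simp
  then show ?thesis
    using wdeg_nonneg[of w S] by simp
qed

theorem proposition1:
  fixes n :: nat and f :: "nat \<Rightarrow> 'a::field_char_0 mpoly"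
    and R P :: "'a mpoly" and k :: nat
  defines "d \<equiv> \<lambda>i. nat (tdeg (f i))"
    and "nabla \<equiv> (\<Sum>i<n. tdeg (f i)) - int n"
  assumes K: "alg_closed TYPE('a)"
    and n: "n \<ge> 1"
    and aut: "poly_automorphism n f"
    and I: "{Q \<in> polys n. subst (\<lambda>i. hbar (f i)) Q = 0} = pideal n R"
    and R_irr: "irreducible_in n R"
    and R_der: "pderiv_var (n - 1) R \<noteq> 0"
    and P: "P \<in> polys n" "P \<noteq> 0"
    and k_in: "top_comp d P \<in> pideal n (R ^ k)"
    and k_out: "top_comp d P \<notin> pideal n (R ^ (k + 1))"
  shows "(tdeg (subst f ((pderiv_var (n - 1) ^^ k) P)) = wdeg d ((pderiv_var (n - 1) ^^ k) P)
          \<and> wdeg d ((pderiv_var (n - 1) ^^ k) P) = wdeg d P - int k * int (d (n - 1)))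
         \<and> tdeg (subst f P) \<ge> wdeg d P - int k * nabla
         \<and> tdeg (subst f P) \<ge> int k * (wdeg d R - nabla)"
proof -
  obtain g where "poly_automorphism_pair n f g"
    using aut by (auto simp: poly_automorphism_def poly_automorphism_pair_def)
  then interpret poly_automorphism_pair n f g .
  define j where "j = n - 1"
  have j: "j < n" and R: "R \<in> polys n"
    using n R_irr by (auto simp: j_def irreducible_in_def)
  obtain S where S: "S \<in> polys n" "top_comp d P = R ^ k * S" "S \<notin> pideal n R"
    using k_in k_out by (rule pideal_power_exact)
  define T where "T = (pderiv_var j ^^ k) (top_comp d P)"
  have T: "subst (\<lambda>i. hbar (f i)) T \<noteq> 0"
    using subst_pderiv_var_iter_nonzero[OF I R R_der S(1,3)] S(2) by (simp add: T_def j_def)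
  then have "T \<noteq> 0"
    by auto
  note top = top_comp_pderiv_var_iter[OF this[unfolded T_def]]
  have part1: "tdeg (subst f ((pderiv_var j ^^ k) P)) = wdeg d ((pderiv_var j ^^ k) P)"
    using tdeg_subst_eq_wdeg[of f "(pderiv_var j ^^ k) P"] T top(1) by (simp add: T_def d_def)
  have "tdeg (subst f ((pderiv_var j ^^ k) P)) \<le> tdeg (subst f P) + int k * (nabla - tdeg (f j))"
    using tdeg_subst_pderiv_var_iter_le[OF P(1) j] top(1) \<open>T \<noteq> 0\<close> by (force simp: T_def nabla_def)
  moreover have "int k * wdeg d R \<le> wdeg d P"
    by (rule wdeg_ge_top_comp_factor[OF S(2) P(2)])
  ultimately show ?thesis
    using part1 top(2) by (simp add: d_def j_def tdeg_nonneg algebra_simps)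
qed

end
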